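(* Let $n\ge3$ be odd, $d,R\in\mathbb{Q}$, $d\ne0$, $R$ not a square, $D=d^2-R$, $\zeta$ a primitive $n$th root of unity and $K=\mathbb{Q}(\sqrt R(\zeta-\zeta^{-1}))$. If $f_n=f_n(Z,d,R)$ has a zero in $\mathbb{Q}$, then the splitting field $L\subseteq\mathbb{C}$ of $f_n$ over $\mathbb{Q}$ equals $K$.
   Context: $f_n(Z,d,R)=\sum_{j=0}^{(n-1)/2}(-1)^j\frac{n}{n-j}\binom{n-j}{j}D^jZ^{n-2j}-2dD^{(n-1)/2}$, which equals $\sqrt D^{\,n}F_n(Z/\sqrt D)-2dD^{(n-1)/2}$ where $F_n(Z)=2T_n(Z/2)$ and $T_n$ is the Chebyshev polynomial of the first kind. *)

theory Defs
  imports Complex_Main "HOL-Computational_Algebra.Polynomial"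
begin

definition f_poly :: "nat \<Rightarrow> rat \<Rightarrow> rat \<Rightarrow> rat poly" where
  "f_poly n d R = (let D = d^2 - R in
     (\<Sum>j\<in>{0..(n - 1) div 2}.
        monom ((-1)^j * (of_nat n / of_nat (n - j)) * of_nat ((n - j) choose j) * D^j) (n - 2*j))
     - [: 2 * d * D^((n - 1) div 2) :])"

definition is_subfield_C :: "complex set \<Rightarrow> bool" where
  "is_subfield_C F \<longleftrightarrow> 0 \<in> F \<and> 1 \<in> F \<and>
     (\<forall>x\<in>F. \<forall>y\<in>F. x + y \<in> F \<and> x * y \<in> F) \<and>
     (\<forall>x\<in>F. - x \<in> F \<and> inverse x \<in> F)"

definition field_gen :: "complex set \<Rightarrow> complex set" where
  "field_gen S = \<Inter>{F. is_subfield_C F \<and> S \<subseteq> F}"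

definition splitting_field_C :: "rat poly \<Rightarrow> complex set" where
  "splitting_field_C p = field_gen {z. poly (map_poly of_rat p) z = 0}"

end

theory Submission
  imports Defs
begin

text \<open>
  With \<open>D = d\<^sup>2 - R\<close> and \<open>m = (n - 1) div 2\<close>, \<open>f\<^sub>n\<close> is a Dickson polynomial shifted by a
  constant: for \<open>x y = D\<close> one has \<open>f\<^sub>n(x + y) = x\<^sup>n + y\<^sup>n - 2 d D\<^sup>m\<close>. Writing the rational root
  as \<open>P + Q\<close> with \<open>P Q = D\<close>, the roots of \<open>f\<^sub>n\<close> are therefore exactly the numbers
  \<open>P \<omega> + Q / \<omega>\<close> with \<open>\<omega>\<^sup>n = 1\<close>. Moreover \<open>(P\<^sup>n - Q\<^sup>n)\<^sup>2 = (2 d D\<^sup>m)\<^sup>2 - 4 D\<^sup>n = (2 D\<^sup>m)\<^sup>2 R\<close>,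
  while \<open>P\<^sup>n - Q\<^sup>n\<close> is a rational multiple of \<open>P - Q\<close>; hence \<open>P - Q = r \<surd>R\<close> with \<open>r\<close> rational
  and nonzero. Each root \<open>(P + Q)/2 (\<omega> + 1/\<omega>) + r/2 \<surd>R (\<omega> - 1/\<omega>)\<close> then lies in \<open>K\<close>, and
  conversely \<open>\<surd>R (\<zeta> - 1/\<zeta>)\<close> is the difference of the roots for \<open>\<omega> = \<zeta>\<close> and \<open>\<omega> = 1/\<zeta>\<close>,
  divided by \<open>r\<close>.
\<close>

text \<open>Coefficients of the Dickson polynomial \<open>D n (s, e)\<close>, generated by the recurrence
  \<open>D (n + 2) = s D (n + 1) - e D n\<close> rather than by their closed form \<open>n / (n - j) * ((n - j) choose j)\<close>.\<close>

fun dickson_coeff :: "nat \<Rightarrow> nat \<Rightarrow> nat" where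
  "dickson_coeff 0 j = (if j = 0 then 2 else 0)"
| "dickson_coeff (Suc 0) j = (if j = 0 then 1 else 0)"
| "dickson_coeff (Suc (Suc n)) 0 = 1"
| "dickson_coeff (Suc (Suc n)) (Suc j) = dickson_coeff (Suc n) (Suc j) + dickson_coeff n j"

lemma dickson_coeff_eq_0: "n < 2 * j \<Longrightarrow> dickson_coeff n j = 0"
  by (induction n j rule: dickson_coeff.induct) auto

lemma dickson_coeff_Suc_0 [simp]: "dickson_coeff (Suc n) 0 = 1"
  by (cases n) auto

definition dickson :: "nat \<Rightarrow> 'a::comm_ring_1 \<Rightarrow> 'a \<Rightarrow> 'a" where
  "dickson n s e = (\<Sum>j\<le>n. of_nat (dickson_coeff n j) * (-e)^j * s^(n - 2*j))"

lemma dickson_Suc_Suc: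
  "dickson (Suc (Suc n)) s e = s * dickson (Suc n) s e - e * dickson n s e"
proof -
  define t where "t m j = of_nat (dickson_coeff m j) * (-e)^j * s^(m - 2*j)" for m j
  have step: "t (Suc (Suc n)) (Suc j) = s * t (Suc n) (Suc j) - e * t n j" for j
  proof (cases "Suc n < 2 * Suc j")
    case True
    then show ?thesis by (simp add: t_def dickson_coeff_eq_0)
  next
    case False
    then have "n - 2*j = Suc (Suc n - 2 * Suc j)" by simp
    then show ?thesis by (simp add: t_def algebra_simps)
  qed
  have base: "t (Suc (Suc n)) 0 = s * t (Suc n) 0"
    by (simp add: t_def)
  have vanish: "t (Suc n) (Suc (Suc n)) = 0" "t n (Suc n) = 0"
    by (simp_all add: t_def dickson_coeff_eq_0)
  have "dickson (Suc (Suc n)) s e = t (Suc (Suc n)) 0 + (\<Sum>j\<le>Suc n. t (Suc (Suc n)) (Suc j))"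
    unfolding dickson_def t_def by (rule sum.atMost_Suc_shift)
  also have "\<dots> = s * (t (Suc n) 0 + (\<Sum>j\<le>Suc n. t (Suc n) (Suc j))) - e * (\<Sum>j\<le>Suc n. t n j)"
    by (simp add: base step sum_subtractf sum_distrib_left algebra_simps)
  also have "\<dots> = s * dickson (Suc n) s e - e * dickson n s e"
  proof -
    have "dickson (Suc n) s e = t (Suc n) 0 + (\<Sum>j\<le>n. t (Suc n) (Suc j))"
      unfolding dickson_def t_def by (rule sum.atMost_Suc_shift)
    moreover have "dickson n s e = (\<Sum>j\<le>Suc n. t n j)"
      using vanish by (simp add: dickson_def t_def)
    ultimately show ?thesis using vanish by simp
  qed
  finally show ?thesis .
qed

lemma dickson_sum_prod: "dickson n (x + y) (x * y) = x^n + y^n"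
proof -
  have "dickson n (x + y) (x * y) = x^n + y^n \<and> dickson (Suc n) (x + y) (x * y) = x^Suc n + y^Suc n"
    by (induction n) (simp_all add: dickson_Suc_Suc, simp_all add: dickson_def algebra_simps)
  then show ?thesis ..
qed

lemma dickson_closed_form_recurrence:
  assumes "0 < m"
  shows "of_nat (m + j + 2) / of_nat (Suc m) * of_nat (Suc m choose Suc j)
       = of_nat (m + j + 1) / of_nat m * of_nat (m choose Suc j)
         + of_nat (m + j) / of_nat m * (of_nat (m choose j) :: 'a::field_char_0)"
proof -
  define a b where "a = (of_nat (m choose j) :: 'a)" and "b = (of_nat (m choose Suc j) :: 'a)"
  have absorb: "of_nat (Suc j) * b = (of_nat m - of_nat j) * a"
  proof (cases "j \<le> m")
    case True
    then show ?thesis using binomial_absorb_comp[of m j] binomial_absorption[of j m]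
      unfolding a_def b_def by (metis of_nat_diff of_nat_mult)
  qed (simp add: a_def b_def binomial_eq_0)
  have nonzero: "(of_nat m :: 'a) \<noteq> 0" "(of_nat (Suc m) :: 'a) \<noteq> 0"
    using assms by (simp_all del: of_nat_Suc)
  have "of_nat (m + j + 1) / of_nat m * b + of_nat (m + j) / of_nat m * a
        - of_nat (m + j + 2) / of_nat (Suc m) * (a + b)
      = (of_nat (Suc j) * b - (of_nat m - of_nat j) * a) / (of_nat m * of_nat (Suc m))"
    using nonzero by (simp add: field_simps del: of_nat_Suc) (simp add: algebra_simps)
  then show ?thesis using absorb by (simp add: a_def b_def)
qed

lemma of_nat_dickson_coeff:
  assumes "0 < n"
  shows "(of_nat (dickson_coeff n j) :: 'a::field_char_0)
           = of_nat n / of_nat (n - j) * of_nat ((n - j) choose j)"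
  using assms
proof (induction n j rule: dickson_coeff.induct)
  case (4 n j)
  show ?case
  proof (cases "j < n")
    case True
    define m where "m = n - j"
    have "n = m + j" "0 < m" using True by (simp_all add: m_def)
    moreover have "(of_nat (dickson_coeff (Suc (Suc n)) (Suc j)) :: 'a)
        = of_nat (Suc n) / of_nat m * of_nat (m choose Suc j) + of_nat n / of_nat m * of_nat (m choose j)"
      using 4 True by (simp add: m_def)
    ultimately show ?thesis
      using dickson_closed_form_recurrence[of m j, where 'a = 'a] by (simp add: Suc_diff_le)
  next
    case False
    show ?thesis
    proof (cases "n = 0")
      case True
      then show ?thesis by (cases j) simp_all
    next
      case False
      with \<open>\<not> j < n\<close> have "Suc (Suc n) < 2 * Suc j" by simp
      then show ?thesis using \<open>\<not> j < n\<close> by (simp add: dickson_coeff_eq_0 binomial_eq_0)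
    qed
  qed
qed (simp_all del: of_nat_Suc)

lemma map_poly_of_rat_diff:
  "map_poly (of_rat :: rat \<Rightarrow> 'a::field_char_0) (p - q) = map_poly of_rat p - map_poly of_rat q"
  by (rule poly_eqI) (simp add: coeff_map_poly of_rat_diff)

lemma map_poly_of_rat_sum:
  "map_poly (of_rat :: rat \<Rightarrow> 'a::field_char_0) (\<Sum>j\<in>A. f j) = (\<Sum>j\<in>A. map_poly of_rat (f j))"
proof (induction A rule: infinite_finite_induct)
  case (insert j A)
  have "map_poly (of_rat :: rat \<Rightarrow> 'a) (f j + sum f A) = map_poly of_rat (f j) + map_poly of_rat (sum f A)"
    by (rule poly_eqI) (simp add: coeff_map_poly of_rat_add)
  with insert show ?case by simp
qed simp_all

lemma poly_map_poly_of_rat: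
  "poly (map_poly (of_rat :: rat \<Rightarrow> 'a::field_char_0) p) (of_rat x) = of_rat (poly p x)"
  by (induction p) (simp_all add: map_poly_pCons of_rat_add of_rat_mult)

lemma poly_f_poly_sum:
  fixes x y :: "'a::field_char_0"
  assumes "odd n" "x * y = of_rat (d\<^sup>2 - R)"
  shows "poly (map_poly of_rat (f_poly n d R)) (x + y)
           = x ^ n + y ^ n - of_rat (2 * d * (d\<^sup>2 - R) ^ ((n - 1) div 2))"
proof -
  define D where "D = d\<^sup>2 - R"
  define m where "m = (n - 1) div 2"
  have "0 < n" using \<open>odd n\<close> by (rule odd_pos)
  have coeff: "(of_rat ((-1)^j * (of_nat n / of_nat (n - j)) * of_nat ((n - j) choose j) * D^j) :: 'a)
      = of_nat (dickson_coeff n j) * (- (x * y))^j" for j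
  proof -
    have "(-1)^j * (of_nat n / of_nat (n - j)) * of_nat ((n - j) choose j) * D^j
        = of_nat (dickson_coeff n j) * (- D)^j"
      by (simp add: of_nat_dickson_coeff[OF \<open>0 < n\<close>] power_minus[of D] mult_ac)
    then show ?thesis
      using assms(2) by (simp add: of_rat_mult of_rat_power of_rat_minus flip: D_def)
  qed
  have "poly (map_poly of_rat (f_poly n d R)) (x + y) =
      (\<Sum>j\<in>{0..m}. of_rat ((-1)^j * (of_nat n / of_nat (n - j)) * of_nat ((n - j) choose j) * D^j)
          * (x + y)^(n - 2*j)) - of_rat (2 * d * D^m)"
    unfolding f_poly_def Let_def D_def[symmetric] m_def[symmetric]
    by (simp add: map_poly_of_rat_diff map_poly_of_rat_sum map_poly_monom map_poly_pCons
                  poly_sum poly_monom)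
  also have "\<dots> = (\<Sum>j\<in>{0..m}. of_nat (dickson_coeff n j) * (- (x * y))^j * (x + y)^(n - 2*j))
      - of_rat (2 * d * D^m)"
    by (simp only: coeff)
  also have "(\<Sum>j\<in>{0..m}. of_nat (dickson_coeff n j) * (- (x * y))^j * (x + y)^(n - 2*j))
      = dickson n (x + y) (x * y)"
    unfolding dickson_def
  proof (rule sum.mono_neutral_left)
    show "\<forall>j\<in>{..n} - {0..m}. of_nat (dickson_coeff n j) * (- (x * y))^j * (x + y)^(n - 2*j) = 0"
      using \<open>odd n\<close> by (auto simp: m_def dickson_coeff_eq_0 elim!: oddE)
  qed (auto simp: m_def)
  finally show ?thesis by (simp add: dickson_sum_prod D_def m_def)
qed

lemma is_subfield_CD:
  assumes "is_subfield_C F"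
  shows "0 \<in> F" "1 \<in> F"
    "x \<in> F \<Longrightarrow> y \<in> F \<Longrightarrow> x + y \<in> F" "x \<in> F \<Longrightarrow> y \<in> F \<Longrightarrow> x * y \<in> F"
    "x \<in> F \<Longrightarrow> - x \<in> F" "x \<in> F \<Longrightarrow> inverse x \<in> F"
  using assms unfolding is_subfield_C_def by auto

lemma subfield_C_diff: "is_subfield_C F \<Longrightarrow> x \<in> F \<Longrightarrow> y \<in> F \<Longrightarrow> x - y \<in> F"
  using is_subfield_CD[of F] by (metis diff_conv_add_uminus)

lemma subfield_C_divide: "is_subfield_C F \<Longrightarrow> x \<in> F \<Longrightarrow> y \<in> F \<Longrightarrow> x / y \<in> F"
  using is_subfield_CD[of F] by (metis divide_inverse)

lemma subfield_C_power: "is_subfield_C F \<Longrightarrow> x \<in> F \<Longrightarrow> x ^ k \<in> F"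
  by (induction k) (simp_all add: is_subfield_CD)

lemma Rats_subset_subfield_C:
  assumes "is_subfield_C F"
  shows "\<rat> \<subseteq> F"
proof -
  have nat: "of_nat k \<in> F" for k
    by (induction k) (simp_all add: is_subfield_CD[OF assms])
  have int: "of_int k \<in> F" for k
    using nat[of "nat k"] nat[of "nat (- k)"] is_subfield_CD(5)[OF assms]
    by (cases "0 \<le> k") (simp_all, metis minus_minus of_int_minus of_int_of_nat_eq)
  show ?thesis
    by (auto elim!: Rats_cases' intro: subfield_C_divide[OF assms] int)
qed

lemma is_subfield_C_field_gen: "is_subfield_C (field_gen S)"
  unfolding field_gen_def is_subfield_C_def by auto

lemma subset_field_gen: "S \<subseteq> field_gen S"
  unfolding field_gen_def by auto

lemma field_gen_least: "is_subfield_C F \<Longrightarrow> S \<subseteq> F \<Longrightarrow> field_gen S \<subseteq> F"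
  unfolding field_gen_def by auto

lemma primitive_root_unity_power:
  fixes \<zeta> \<omega> :: complex
  assumes "0 < n" "\<zeta> ^ n = 1" "\<forall>k. 0 < k \<and> k < n \<longrightarrow> \<zeta> ^ k \<noteq> 1" "\<omega> ^ n = 1"
  obtains k where "k < n" "\<omega> = \<zeta> ^ k"
proof -
  have "\<zeta> \<noteq> 0" using assms(1,2) by (auto simp: power_0_left)
  have less: "\<zeta> ^ i \<noteq> \<zeta> ^ j" if "i < j" "j < n" for i j
  proof
    assume "\<zeta> ^ i = \<zeta> ^ j"
    moreover have "\<zeta> ^ i * \<zeta> ^ (j - i) = \<zeta> ^ j"
      using that by (simp flip: power_add)
    ultimately have "\<zeta> ^ (j - i) = 1" using \<open>\<zeta> \<noteq> 0\<close> by simp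
    then show False using assms(3) that by auto
  qed
  have inj: "inj_on (\<lambda>k. \<zeta> ^ k) {..<n}"
    by (rule inj_onI) (metis lessThan_iff less linorder_neqE_nat)
  have "card ((\<lambda>k. \<zeta> ^ k) ` {..<n}) = card {z::complex. z ^ n = 1}"
    using card_image[OF inj] card_roots_unity_eq[OF assms(1)] by simp
  moreover have "(\<lambda>k. \<zeta> ^ k) ` {..<n} \<subseteq> {z. z ^ n = 1}"
    using assms(2) by (auto simp: power_mult[symmetric] mult.commute[of _ n] power_mult[of _ n])
  ultimately have "(\<lambda>k. \<zeta> ^ k) ` {..<n} = {z. z ^ n = 1}"
    using assms(1) by (intro card_subset_eq finite_roots_unity) auto
  then show ?thesis using assms(4) that by auto
qed

lemma power_diff_Rats_multiple:
  fixes P Q :: "'a::field_char_0"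
  assumes "P + Q \<in> \<rat>" "P * Q \<in> \<rat>"
  obtains B where "B \<in> \<rat>" "P ^ k - Q ^ k = B * (P - Q)"
proof -
  have "\<exists>B B'. B \<in> \<rat> \<and> B' \<in> \<rat> \<and>
      P ^ k - Q ^ k = B * (P - Q) \<and> P ^ Suc k - Q ^ Suc k = B' * (P - Q)"
  proof (induction k)
    case 0
    show ?case by (rule exI[of _ 0], rule exI[of _ 1]) simp
  next
    case (Suc k)
    then obtain B B' where B: "B \<in> \<rat>" "B' \<in> \<rat>" "P ^ k - Q ^ k = B * (P - Q)"
      "P ^ Suc k - Q ^ Suc k = B' * (P - Q)" by blast
    have "P ^ Suc (Suc k) - Q ^ Suc (Suc k) = (P + Q) * (P ^ Suc k - Q ^ Suc k) - P * Q * (P ^ k - Q ^ k)"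
      by (simp add: algebra_simps)
    also have "\<dots> = ((P + Q) * B' - P * Q * B) * (P - Q)"
      unfolding B(3,4) by (simp add: algebra_simps)
    finally have "P ^ Suc (Suc k) - Q ^ Suc (Suc k) = ((P + Q) * B' - P * Q * B) * (P - Q)" .
    moreover have "(P + Q) * B' - P * Q * B \<in> \<rat>"
      using B assms by simp
    ultimately show ?case using B by blast
  qed
  then show ?thesis using that by blast
qed

lemma odd_power_conj_sums_in_subfield:
  fixes \<zeta> c :: complex
  assumes K: "is_subfield_C K" and "odd n" "\<zeta> ^ n = 1"
    and \<alpha>: "c * (\<zeta> - inverse \<zeta>) \<in> K" and "c\<^sup>2 \<in> \<rat>" "c \<noteq> 0"
  shows "\<zeta> ^ k + inverse (\<zeta> ^ k) \<in> K" "c * (\<zeta> ^ k - inverse (\<zeta> ^ k)) \<in> K"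
proof -
  define G where "G j = \<zeta> ^ (2*j) + inverse (\<zeta> ^ (2*j))" for j
  define E where "E j = c * (\<zeta> ^ (2*j+1) - inverse (\<zeta> ^ (2*j+1)))" for j
  have "\<zeta> \<noteq> 0" using assms(2,3) by (auto simp: power_0_left elim!: oddE)
  have QK: "\<rat> \<subseteq> K" by (rule Rats_subset_subfield_C[OF K])
  note closed = is_subfield_CD[OF K] subfield_C_diff[OF K] subfield_C_divide[OF K]
  \<comment> \<open>Both \<open>G\<close> and \<open>E\<close> satisfy \<open>u (j + 2) = G 1 * u (j + 1) - u j\<close>, with \<open>G 1 = \<alpha>\<^sup>2 / c\<^sup>2 + 2 \<in> K\<close>;
     as \<open>n\<close> is odd, \<open>\<zeta> ^ k = \<zeta> ^ (k + n)\<close> is both an even and an odd power of \<open>\<zeta>\<close>.\<close>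
  have G1: "G 1 \<in> K"
  proof -
    have "G 1 = (c * (\<zeta> - inverse \<zeta>))\<^sup>2 / c\<^sup>2 + 2"
      using \<open>\<zeta> \<noteq> 0\<close> \<open>c \<noteq> 0\<close> by (simp add: G_def field_simps power2_eq_square)
    moreover have "(c * (\<zeta> - inverse \<zeta>))\<^sup>2 \<in> K" "c\<^sup>2 \<in> K" "2 \<in> K"
      using subfield_C_power[OF K \<alpha>] QK \<open>c\<^sup>2 \<in> \<rat>\<close> by auto
    ultimately show ?thesis by (metis closed(3) subfield_C_divide[OF K])
  qed
  have rec: "G (Suc (Suc j)) = G 1 * G (Suc j) - G j" "E (Suc (Suc j)) = G 1 * E (Suc j) - E j" for j
    using \<open>\<zeta> \<noteq> 0\<close>
    by (simp_all add: G_def E_def field_simps power_add power_mult power2_eq_square)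
  have start: "G 0 \<in> K" "E 0 \<in> K" "E 1 \<in> K"
  proof -
    have "G 0 = 2" "E 0 = c * (\<zeta> - inverse \<zeta>)" "E 1 = (G 1 + 1) * E 0"
      using \<open>\<zeta> \<noteq> 0\<close> by (simp_all add: G_def E_def field_simps power2_eq_square power3_eq_cube)
    then show "G 0 \<in> K" "E 0 \<in> K" "E 1 \<in> K"
      using QK \<alpha> G1 by (auto intro!: closed)
  qed
  have GE: "G j \<in> K \<and> G (j+1) \<in> K \<and> E j \<in> K \<and> E (j+1) \<in> K" for j
    by (induction j) (use start G1 in \<open>simp_all add: rec closed\<close>)
  obtain i j where "(k = 2*i \<and> k + n = 2*j+1) \<or> (k = 2*i+1 \<and> k + n = 2*j)"
    using \<open>odd n\<close> by (metis evenE oddE odd_add)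
  moreover have "\<zeta> ^ (k + n) = \<zeta> ^ k" using \<open>\<zeta> ^ n = 1\<close> by (simp add: power_add)
  ultimately show "\<zeta> ^ k + inverse (\<zeta> ^ k) \<in> K" "c * (\<zeta> ^ k - inverse (\<zeta> ^ k)) \<in> K"
    using GE[of i] GE[of j] unfolding G_def E_def by metis+
qed

lemma obtain_sum_prod:
  fixes z e :: complex
  obtains x y where "x + y = z" "x * y = e"
proof
  let ?s = "csqrt (z\<^sup>2 - 4 * e)"
  show "(z + ?s) / 2 + (z - ?s) / 2 = z" by (simp add: field_simps)
  have "?s\<^sup>2 = z\<^sup>2 - 4 * e" by simp
  then show "(z + ?s) / 2 * ((z - ?s) / 2) = e" by (simp add: field_simps power2_eq_square)
qed

lemma power_sum_eq_imp_root_of_unity: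
  fixes P Q x y :: "'a::field"
  assumes "x * y = P * Q" "P * Q \<noteq> 0" "x ^ n + y ^ n = P ^ n + Q ^ n"
  obtains \<omega> where "\<omega> ^ n = 1" "x + y = P * \<omega> + Q * inverse \<omega>"
proof -
  have nonzero: "P \<noteq> 0" "Q \<noteq> 0" "x \<noteq> 0" using assms(1,2) by auto
  have "(x ^ n - P ^ n) * (x ^ n - Q ^ n) = x ^ n * x ^ n - (x ^ n + y ^ n) * x ^ n + (x * y) ^ n"
    using assms(1,3) by (simp add: algebra_simps power_mult_distrib)
  also have "\<dots> = 0" by (simp add: algebra_simps power_mult_distrib)
  finally consider "x ^ n = P ^ n" | "x ^ n = Q ^ n" by auto
  then show ?thesis
  proof cases
    case 1
    show ?thesis
    proof (rule that[of "x / P"])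
      show "(x / P) ^ n = 1" using 1 nonzero by (simp add: power_divide)
      show "x + y = P * (x / P) + Q * inverse (x / P)"
        using assms(1) nonzero by (simp add: field_simps)
    qed
  next
    case 2
    show ?thesis
    proof (rule that[of "Q / x"])
      show "(Q / x) ^ n = 1" using 2 nonzero by (simp add: power_divide)
      show "x + y = P * (Q / x) + Q * inverse (Q / x)"
        using assms(1) nonzero by (simp add: field_simps)
    qed
  qed
qed

lemma roots_f_poly:
  fixes n :: nat and d R :: rat and P Q :: complex
  defines "F \<equiv> map_poly of_rat (f_poly n d R)"
  assumes "odd n" "P * Q = of_rat (d\<^sup>2 - R)" "d\<^sup>2 - R \<noteq> 0" "poly F (P + Q) = 0"
  shows "{z. poly F z = 0} = {P * \<omega> + Q * inverse \<omega> | \<omega>. \<omega> ^ n = 1}"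
proof -
  define g where "g = (of_rat (2 * d * (d\<^sup>2 - R) ^ ((n - 1) div 2)) :: complex)"
  have poly_F: "poly F (x + y) = x ^ n + y ^ n - g" if "x * y = P * Q" for x y
    unfolding F_def g_def using that assms(3) by (intro poly_f_poly_sum[OF \<open>odd n\<close>]) simp
  have root_iff: "poly F (x + y) = 0 \<longleftrightarrow> x ^ n + y ^ n = P ^ n + Q ^ n" if "x * y = P * Q" for x y
    using poly_F[OF that] poly_F[OF refl] assms(5) by simp
  show ?thesis
  proof (intro equalityI subsetI)
    fix z assume "z \<in> {z. poly F z = 0}"
    obtain x y where xy: "x + y = z" "x * y = P * Q" by (rule obtain_sum_prod)
    have "P * Q \<noteq> 0" using assms(3,4) by simp
    moreover have "x ^ n + y ^ n = P ^ n + Q ^ n"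
      using root_iff[OF xy(2)] xy(1) \<open>z \<in> {z. poly F z = 0}\<close> by simp
    ultimately obtain \<omega> where "\<omega> ^ n = 1" "z = P * \<omega> + Q * inverse \<omega>"
      using power_sum_eq_imp_root_of_unity[OF xy(2)] xy(1) by metis
    then show "z \<in> {P * \<omega> + Q * inverse \<omega> | \<omega>. \<omega> ^ n = 1}" by blast
  next
    fix z assume "z \<in> {P * \<omega> + Q * inverse \<omega> | \<omega>. \<omega> ^ n = 1}"
    then obtain \<omega> where \<omega>: "\<omega> ^ n = 1" "z = P * \<omega> + Q * inverse \<omega>" by blast
    then have "\<omega> \<noteq> 0" using \<open>odd n\<close> by (auto elim!: oddE)
    then have "(P * \<omega>) * (Q * inverse \<omega>) = P * Q" by (simp add: field_simps)
    moreover have "(P * \<omega>) ^ n + (Q * inverse \<omega>) ^ n = P ^ n + Q ^ n"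
      using \<omega>(1) by (simp add: power_mult_distrib power_inverse)
    ultimately show "z \<in> {z. poly F z = 0}" using root_iff \<omega>(2) by simp
  qed
qed

lemma f_poly_root_diff:
  fixes n :: nat and d R :: rat and P Q :: complex
  assumes "odd n" "R \<noteq> 0" "d\<^sup>2 - R \<noteq> 0" "P + Q \<in> \<rat>" "P * Q = of_rat (d\<^sup>2 - R)"
    and "poly (map_poly of_rat (f_poly n d R)) (P + Q) = 0"
  obtains r where "r \<in> \<rat>" "r \<noteq> 0" "P - Q = r * csqrt (of_rat R)"
proof -
  define m where "m = (n - 1) div 2"
  define D where "D = (of_rat (d\<^sup>2 - R) :: complex)"
  define c where "c = csqrt (of_rat R :: complex)"
  have n: "n = 2 * m + 1" using \<open>odd n\<close> by (auto simp: m_def elim!: oddE)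
  have "D \<in> \<rat>" "D \<noteq> 0" "c \<noteq> 0" using assms(2,3) by (simp_all add: D_def c_def)
  have sum: "P ^ n + Q ^ n = 2 * of_rat d * D ^ m"
    using poly_f_poly_sum[OF \<open>odd n\<close> assms(5)] assms(6)
    by (simp add: D_def m_def of_rat_mult of_rat_power)
  have "(P ^ n - Q ^ n)\<^sup>2 = (P ^ n + Q ^ n)\<^sup>2 - 4 * (P * Q) ^ n"
    by (simp add: power2_eq_square power_mult_distrib algebra_simps)
  also have "\<dots> = (2 * of_rat d * D ^ m)\<^sup>2 - 4 * D ^ n"
    unfolding sum assms(5) D_def[symmetric] ..
  also have "\<dots> = 4 * (D ^ m)\<^sup>2 * ((of_rat d)\<^sup>2 - D)"
  proof -
    have "D ^ n = (D ^ m)\<^sup>2 * D"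
      unfolding n by (metis power_add power_mult mult.commute power_one_right)
    then show ?thesis by (simp add: power2_eq_square algebra_simps)
  qed
  also have "\<dots> = (2 * D ^ m * c)\<^sup>2"
    by (simp add: D_def c_def of_rat_diff of_rat_power power_mult_distrib)
  finally obtain s where s: "s = 1 \<or> s = -1" "P ^ n - Q ^ n = s * (2 * D ^ m * c)"
    by (metis power2_eq_iff mult_1 mult_minus1)
  obtain B where B: "B \<in> \<rat>" "P ^ n - Q ^ n = B * (P - Q)"
    using power_diff_Rats_multiple[of P Q] assms(4,5) by auto
  have "B \<noteq> 0" using s B \<open>D \<noteq> 0\<close> \<open>c \<noteq> 0\<close> by auto
  show ?thesis
  proof (rule that[of "s * 2 * D ^ m / B"])
    show "s * 2 * D ^ m / B \<in> \<rat>" using s(1) B(1) \<open>D \<in> \<rat>\<close> by auto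
    show "s * 2 * D ^ m / B \<noteq> 0" using s(1) \<open>B \<noteq> 0\<close> \<open>D \<noteq> 0\<close> by auto
    show "P - Q = s * 2 * D ^ m / B * csqrt (of_rat R)"
      using s(2) B(2) \<open>B \<noteq> 0\<close> by (simp add: c_def field_simps)
  qed
qed

lemma conj_combination_in_subfield:
  fixes \<zeta> c P Q \<omega> :: complex
  assumes K: "is_subfield_C K"
    and "odd n" "\<zeta> ^ n = 1" "\<forall>k. 0 < k \<and> k < n \<longrightarrow> \<zeta> ^ k \<noteq> 1"
    and "c * (\<zeta> - inverse \<zeta>) \<in> K" "c\<^sup>2 \<in> \<rat>" "c \<noteq> 0"
    and "P + Q \<in> \<rat>" "r \<in> \<rat>" "P - Q = r * c" "\<omega> ^ n = 1"
  shows "P * \<omega> + Q * inverse \<omega> \<in> K"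
proof -
  obtain k where "\<omega> = \<zeta> ^ k"
    using primitive_root_unity_power[OF odd_pos[OF \<open>odd n\<close>] assms(3,4,11)] by metis
  then have "\<omega> + inverse \<omega> \<in> K" "c * (\<omega> - inverse \<omega>) \<in> K"
    using odd_power_conj_sums_in_subfield[OF K assms(2,3,5,6,7)] by simp_all
  moreover have "(P + Q) / 2 \<in> K" "r / 2 \<in> K"
    using Rats_subset_subfield_C[OF K] assms(8,9) by auto
  moreover have "P * \<omega> + Q * inverse \<omega>
      = (P + Q) / 2 * (\<omega> + inverse \<omega>) + r / 2 * (c * (\<omega> - inverse \<omega>))"
    using \<open>P - Q = r * c\<close> by (simp add: algebra_simps) (simp add: field_simps)
  ultimately show ?thesis by (metis is_subfield_CD(3,4)[OF K])
qed

lemma conj_difference_in_field_gen: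
  fixes P Q c r \<zeta> :: complex
  assumes "\<zeta> ^ n = 1" "r \<in> \<rat>" "r \<noteq> 0" "P - Q = r * c"
  shows "c * (\<zeta> - inverse \<zeta>) \<in> field_gen {P * \<omega> + Q * inverse \<omega> | \<omega>. \<omega> ^ n = 1}"
proof -
  let ?L = "field_gen {P * \<omega> + Q * inverse \<omega> | \<omega>. \<omega> ^ n = 1}"
  have L: "is_subfield_C ?L" by (rule is_subfield_C_field_gen)
  have root: "P * \<omega> + Q * inverse \<omega> \<in> ?L" if "\<omega> ^ n = 1" for \<omega>
    using that by (intro subset_field_gen[THEN subsetD]) blast
  have root_\<zeta>: "P * \<zeta> + Q * inverse \<zeta> \<in> ?L" and root_inverse_\<zeta>: "P * inverse \<zeta> + Q * \<zeta> \<in> ?L"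
    using root[of \<zeta>] root[of "inverse \<zeta>"] assms(1) by (simp_all add: power_inverse)
  have "r \<in> ?L" using Rats_subset_subfield_C[OF L] assms(2) by blast
  have "(P * \<zeta> + Q * inverse \<zeta>) - (P * inverse \<zeta> + Q * \<zeta>) = r * (c * (\<zeta> - inverse \<zeta>))"
    unfolding mult.assoc[symmetric] assms(4)[symmetric] by (simp add: algebra_simps)
  then have "c * (\<zeta> - inverse \<zeta>) = ((P * \<zeta> + Q * inverse \<zeta>) - (P * inverse \<zeta> + Q * \<zeta>)) / r"
    using assms(3) by simp
  also have "\<dots> \<in> ?L"
    by (rule subfield_C_divide[OF L subfield_C_diff[OF L root_\<zeta> root_inverse_\<zeta>] \<open>r \<in> ?L\<close>])
  finally show ?thesis .
qed

lemma field_gen_conj_combinations: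
  fixes \<zeta> c P Q :: complex
  assumes "odd n" "\<zeta> ^ n = 1" "\<forall>k. 0 < k \<and> k < n \<longrightarrow> \<zeta> ^ k \<noteq> 1"
    and "c\<^sup>2 \<in> \<rat>" "c \<noteq> 0"
    and "P + Q \<in> \<rat>" "r \<in> \<rat>" "r \<noteq> 0" "P - Q = r * c"
  shows "field_gen {P * \<omega> + Q * inverse \<omega> | \<omega>. \<omega> ^ n = 1}
           = field_gen {c * (\<zeta> - inverse \<zeta>)}"
proof (intro equalityI field_gen_least is_subfield_C_field_gen subsetI)
  fix z assume "z \<in> {P * \<omega> + Q * inverse \<omega> | \<omega>. \<omega> ^ n = 1}"
  then obtain \<omega> where "\<omega> ^ n = 1" "z = P * \<omega> + Q * inverse \<omega>" by blast
  moreover have "c * (\<zeta> - inverse \<zeta>) \<in> field_gen {c * (\<zeta> - inverse \<zeta>)}"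
    using subset_field_gen by blast
  ultimately show "z \<in> field_gen {c * (\<zeta> - inverse \<zeta>)}"
    using conj_combination_in_subfield[OF is_subfield_C_field_gen assms(1-3) _ assms(4-7,9)] by blast
next
  fix z assume "z \<in> {c * (\<zeta> - inverse \<zeta>)}"
  then show "z \<in> field_gen {P * \<omega> + Q * inverse \<omega> | \<omega>. \<omega> ^ n = 1}"
    using conj_difference_in_field_gen[OF assms(2,7,8,9)] by simp
qed

theorem corollary1:
  fixes n :: nat and d R :: rat and \<zeta> :: complex
  assumes "n \<ge> 3" and "odd n"
    and "d \<noteq> 0"
    and "\<not> (\<exists>q::rat. q^2 = R)"
    and "\<zeta> ^ n = 1" and "\<forall>k. 0 < k \<and> k < n \<longrightarrow> \<zeta> ^ k \<noteq> 1"
    and "\<exists>z::rat. poly (f_poly n d R) z = 0"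
  shows "splitting_field_C (f_poly n d R)
           = field_gen {csqrt (of_rat R) * (\<zeta> - inverse \<zeta>)}"
proof -
  define F where "F = map_poly (of_rat :: rat \<Rightarrow> complex) (f_poly n d R)"
  have "R \<noteq> 0" "d\<^sup>2 - R \<noteq> 0" using assms(4) by auto
  obtain z where "poly (f_poly n d R) z = 0" using assms(7) by blast
  obtain P Q :: complex where PQ: "P + Q = of_rat z" "P * Q = of_rat (d\<^sup>2 - R)"
    by (rule obtain_sum_prod)
  have root: "poly F (P + Q) = 0"
    using \<open>poly (f_poly n d R) z = 0\<close> by (simp add: PQ(1) F_def poly_map_poly_of_rat)
  obtain r where r: "r \<in> \<rat>" "r \<noteq> 0" "P - Q = r * csqrt (of_rat R)"
    using f_poly_root_diff[OF \<open>odd n\<close> \<open>R \<noteq> 0\<close> \<open>d\<^sup>2 - R \<noteq> 0\<close> _ PQ(2)] root PQ(1)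
    unfolding F_def by auto
  have "{z. poly F z = 0} = {P * \<omega> + Q * inverse \<omega> | \<omega>. \<omega> ^ n = 1}"
    using roots_f_poly[OF \<open>odd n\<close> PQ(2) \<open>d\<^sup>2 - R \<noteq> 0\<close>] root by (simp add: F_def)
  then show ?thesis
    unfolding splitting_field_C_def F_def[symmetric] using \<open>R \<noteq> 0\<close> PQ(1) r
    by (simp add: field_gen_conj_combinations[OF \<open>odd n\<close> assms(5,6)])
qed

end
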